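(* Let $(\Omega,\mathcal F)$ be a measurable space with at least three pairwise disjoint non-null events and $\succeq$ a preference order on $\mathcal L^\infty(\Omega,\mathcal F)$ satisfying (SM), (PC), (ST). Let $(\mathbb u,\mathbb P)$ be a pair where $\mathbb P$ is a probability on $\mathcal F$ with $\mathcal N_\succeq=\{\mathbb P=0\}$, $\mathbb u$ is $\mathcal F$-regular with $\mathbb u(\cdot,x)\in\mathcal L^1(\Omega,\mathcal F,\mathbb P)$ for all $x$, and $f\succeq g\iff\int\mathbb u(\omega,f(\omega))d\mathbb P\ge\int\mathbb u(\omega,g(\omega))d\mathbb P$. Then for every sub-$\sigma$-algebra $\mathcal G\subseteq\mathcal F$ and every $f\in\mathcal L^\infty(\Omega,\mathcal F)$, $\mathfrak m(f\mid\mathcal G)\neq\varnothing$, and there exist: (1) a $\mathcal G$-regular function $\mathbb u_{\mathcal G}:\Omega\times\mathbb R\to\mathbb R$ such that for every $x\in\mathbb R$, $\mathbb u_{\mathcal G}(\cdot,x)\in\mathcal L^1(\Omega,\mathcal G,\mathbb P)$ and $\mathbb u_{\mathcal G}(\cdot,x)$ is a version of $\mathbb E_{\mathbb P}[\mathbb u(\cdot,x)\mid\mathcal G]$; (2) a version $g$ of $\mathbb E_{\mathbb P}[\mathbb u(\cdot,f(\cdot))\mid\mathcal G]$ such that $\omega\mapsto\Phi_{\mathcal G}(\omega,g(\omega))$ belongs to $\mathfrak m(f\mid\mathcal G)$, where $\Phi_{\mathcal G}:\Omega\times\mathbb R\to[-\infty,+\infty]$, $\Phi_{\mathcal G}(\omega,x):=\inf\{y\in\mathbb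 R:\mathbb u_{\mathcal G}(\omega,y)>x\}$, is $\mathcal G\otimes\mathcal B_{\mathbb R}$-measurable.
   Context: $\mathcal L^\infty(\Omega,\mathcal F)$: bounded $\mathcal F$-measurable real functions. Preference order: complete transitive relation; $\succ,\sim$ as usual. Null events $\mathcal N_\succeq=\{A\in\mathcal F: f1_A+g1_{A^c}\sim g\ \forall f,g\}$. (SM): for non-null $A$, every $f$ and constants $x>y$: $x1_A+f1_{A^c}\succ y1_A+f1_{A^c}$. (ST): if $f1_A+h1_{A^c}\succeq g1_A+h1_{A^c}$ then $f1_A+\tilde h1_{A^c}\succeq g1_A+\tilde h1_{A^c}$ for every $\tilde h$. (PC): for uniformly bounded $f_n\to f$ pointwise and $g\succ f$ (resp. $f\succ g$) there is $N$ with $g\succ f_n$ (resp. $f_n\succ g$) for $n>N$. Conditional Chisini mean: $\mathfrak m(f\mid\mathcal G)=\{g\in\mathcal L^\infty(\Omega,\mathcal G): f1_A\sim g1_A\ \forall A\in\mathcal G\}$. A function $\varphi$ is $\mathcal G$-regular if $\varphi(\omega,\cdot)$ is continuous and strictly increasing for every $\omega$, $\varphi(\omega,0)=0$ for all $\omega$, and $\varphi$ is $\mathcal G\otimes\mathcal B_{\mathbb R}$-measurable. *)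

theory Defs
  imports "HOL-Probability.Probability"
begin

definition Linf :: "'a measure \<Rightarrow> ('a \<Rightarrow> real) set" where
  "Linf M = {f. f \<in> borel_measurable M \<and> (\<exists>B. \<forall>\<omega>\<in>space M. \<bar>f \<omega>\<bar> \<le> B)}"

definition mix :: "'a set \<Rightarrow> ('a \<Rightarrow> real) \<Rightarrow> ('a \<Rightarrow> real) \<Rightarrow> ('a \<Rightarrow> real)" where
  "mix A f g = (\<lambda>\<omega>. if \<omega> \<in> A then f \<omega> else g \<omega>)"

definition pstrict :: "(('a \<Rightarrow> real) \<Rightarrow> ('a \<Rightarrow> real) \<Rightarrow> bool) \<Rightarrow> ('a \<Rightarrow> real) \<Rightarrow> ('a \<Rightarrow> real) \<Rightarrow> bool" where
  "pstrict R f g \<longleftrightarrow> R f g \<and> \<not> R g f"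

definition pindiff :: "(('a \<Rightarrow> real) \<Rightarrow> ('a \<Rightarrow> real) \<Rightarrow> bool) \<Rightarrow> ('a \<Rightarrow> real) \<Rightarrow> ('a \<Rightarrow> real) \<Rightarrow> bool" where
  "pindiff R f g \<longleftrightarrow> R f g \<and> R g f"

definition preference_order :: "'a measure \<Rightarrow> (('a \<Rightarrow> real) \<Rightarrow> ('a \<Rightarrow> real) \<Rightarrow> bool) \<Rightarrow> bool" where
  "preference_order M R \<longleftrightarrow>
     (\<forall>f\<in>Linf M. \<forall>g\<in>Linf M. R f g \<or> R g f) \<and>
     (\<forall>f\<in>Linf M. \<forall>g\<in>Linf M. \<forall>h\<in>Linf M. R f g \<longrightarrow> R g h \<longrightarrow> R f h)"

definition null_events :: "'a measure \<Rightarrow> (('a \<Rightarrow> real) \<Rightarrow> ('a \<Rightarrow> real) \<Rightarrow> bool) \<Rightarrow> 'a set set" where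
  "null_events M R = {A \<in> sets M. \<forall>f\<in>Linf M. \<forall>g\<in>Linf M. pindiff R (mix A f g) g}"

definition SM :: "'a measure \<Rightarrow> (('a \<Rightarrow> real) \<Rightarrow> ('a \<Rightarrow> real) \<Rightarrow> bool) \<Rightarrow> bool" where
  "SM M R \<longleftrightarrow> (\<forall>A\<in>sets M. A \<notin> null_events M R \<longrightarrow>
     (\<forall>f\<in>Linf M. \<forall>x y::real. x > y \<longrightarrow> pstrict R (mix A (\<lambda>_. x) f) (mix A (\<lambda>_. y) f)))"

definition ST :: "'a measure \<Rightarrow> (('a \<Rightarrow> real) \<Rightarrow> ('a \<Rightarrow> real) \<Rightarrow> bool) \<Rightarrow> bool" where
  "ST M R \<longleftrightarrow> (\<forall>A\<in>sets M. \<forall>f\<in>Linf M. \<forall>g\<in>Linf M. \<forall>h\<in>Linf M. \<forall>h'\<in>Linf M.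
     R (mix A f h) (mix A g h) \<longrightarrow> R (mix A f h') (mix A g h'))"

definition PC :: "'a measure \<Rightarrow> (('a \<Rightarrow> real) \<Rightarrow> ('a \<Rightarrow> real) \<Rightarrow> bool) \<Rightarrow> bool" where
  "PC M R \<longleftrightarrow> (\<forall>fs :: nat \<Rightarrow> 'a \<Rightarrow> real. \<forall>f\<in>Linf M. \<forall>g\<in>Linf M.
     (\<forall>n. fs n \<in> Linf M) \<and> (\<exists>B. \<forall>n. \<forall>\<omega>\<in>space M. \<bar>fs n \<omega>\<bar> \<le> B) \<and>
     (\<forall>\<omega>\<in>space M. (\<lambda>n. fs n \<omega>) \<longlonglongrightarrow> f \<omega>) \<longrightarrow>
       (pstrict R g f \<longrightarrow> (\<exists>N. \<forall>n>N. pstrict R g (fs n))) \<and>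
       (pstrict R f g \<longrightarrow> (\<exists>N. \<forall>n>N. pstrict R (fs n) g)))"

definition chisini :: "'a measure \<Rightarrow> (('a \<Rightarrow> real) \<Rightarrow> ('a \<Rightarrow> real) \<Rightarrow> bool) \<Rightarrow> ('a \<Rightarrow> real) \<Rightarrow> ('a \<Rightarrow> real) set" where
  "chisini G R f = {g \<in> Linf G. \<forall>A\<in>sets G.
     pindiff R (\<lambda>\<omega>. f \<omega> * indicator A \<omega>) (\<lambda>\<omega>. g \<omega> * indicator A \<omega>)}"

definition regular :: "'a measure \<Rightarrow> ('a \<Rightarrow> real \<Rightarrow> real) \<Rightarrow> bool" where
  "regular G \<phi> \<longleftrightarrow>
     (\<forall>\<omega>\<in>space G. continuous_on UNIV (\<phi> \<omega>) \<and> strict_mono (\<phi> \<omega>) \<and> \<phi> \<omega> 0 = 0) \<and>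
     case_prod \<phi> \<in> borel_measurable (G \<Otimes>\<^sub>M borel)"

definition cond_exp_version :: "'a measure \<Rightarrow> 'a measure \<Rightarrow> ('a \<Rightarrow> real) \<Rightarrow> ('a \<Rightarrow> real) \<Rightarrow> bool" where
  "cond_exp_version P G X h \<longleftrightarrow>
     h \<in> borel_measurable G \<and> integrable P h \<and>
     (\<forall>A\<in>sets G. (LINT \<omega>:A|P. h \<omega>) = (LINT \<omega>:A|P. X \<omega>))"

definition PhiG :: "('a \<Rightarrow> real \<Rightarrow> real) \<Rightarrow> 'a \<Rightarrow> real \<Rightarrow> ereal" where
  "PhiG uG \<omega> x = Inf (ereal ` {y. uG \<omega> y > x})"

end

theory Submission
  imports Defs
begin

text \<open>
  For rational \<open>q\<close> the conditional utilities \<open>E[u(\<cdot>, q) | G]\<close> are, outside a single null set,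
  strictly increasing in \<open>q\<close>, vanish at \<open>0\<close> and have uniformly small jumps across fine dyadic
  grids; the last property is a Markov-inequality argument that uses the uniform continuity of
  \<open>u(\<omega>, \<cdot>)\<close> on compact intervals. Monotone limits along dyadic approximations from below then
  give a \<open>G\<close>-regular \<open>u\<^sub>G\<close> that is a version of \<open>E[u(\<cdot>, x) | G]\<close> for every \<open>x\<close>, and
  approximating by dyadic step functions shows that \<open>u(\<cdot>, h)\<close> and \<open>u\<^sub>G(\<cdot>, h)\<close> have the same
  integrals over \<open>G\<close>-sets for every bounded \<open>G\<close>-measurable \<open>h\<close>. Inverting \<open>u\<^sub>G\<close> on a suitably
  clipped version of \<open>E[u(\<cdot>, f) | G]\<close> yields such an \<open>h\<close> with \<open>\<integral>\<^sub>A u(f) = \<integral>\<^sub>A u(h)\<close> for all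
  \<open>A \<in> G\<close>; by the expected-utility representation this makes \<open>h\<close> a conditional Chisini mean,
  and \<open>\<Phi>\<^sub>G\<close> recovers \<open>h\<close> from the version \<open>u\<^sub>G(\<cdot>, h)\<close>.
\<close>

section \<open>Dyadic approximation\<close>

definition dyadic_floor :: "nat \<Rightarrow> real \<Rightarrow> real" where
  "dyadic_floor n x = of_int \<lfloor>x * 2^n\<rfloor> / 2^n"

lemma dyadic_floor_le: "dyadic_floor n x \<le> x"
proof -
  have "of_int \<lfloor>x * 2^n\<rfloor> \<le> x * 2^n" by simp
  then show ?thesis unfolding dyadic_floor_def by (simp add: divide_le_eq)
qed

lemma less_dyadic_floor_add: "x < dyadic_floor n x + 1 / 2^n"
proof -
  have "x * 2^n < of_int \<lfloor>x * 2^n\<rfloor> + 1" by linarith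
  then have "x < (of_int \<lfloor>x * 2^n\<rfloor> + 1) / 2^n" by (simp add: less_divide_eq)
  then show ?thesis unfolding dyadic_floor_def by (simp add: add_divide_distrib)
qed

lemma dyadic_floor_in_Rats: "dyadic_floor n x \<in> \<rat>"
  unfolding dyadic_floor_def by simp

lemma dyadic_floor_of_int: "dyadic_floor n (of_int k) = of_int k"
proof -
  have "of_int k * (2::real)^n = of_int (k * 2^n)" by simp
  then show ?thesis unfolding dyadic_floor_def by (simp only: floor_of_int) simp
qed

lemma incseq_dyadic_floor: "incseq (\<lambda>n. dyadic_floor n x)"
proof (rule incseq_SucI)
  fix n
  have "2 * of_int \<lfloor>x * 2^n\<rfloor> \<le> x * 2^Suc n" using of_int_floor_le[of "x * 2^n"] by simp
  then have "2 * \<lfloor>x * 2^n\<rfloor> \<le> \<lfloor>x * 2^Suc n\<rfloor>" by (simp add: le_floor_iff)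
  then have "real_of_int (2 * \<lfloor>x * 2^n\<rfloor>) \<le> of_int \<lfloor>x * 2^Suc n\<rfloor>" by linarith
  then show "dyadic_floor n x \<le> dyadic_floor (Suc n) x"
    unfolding dyadic_floor_def by (simp add: divide_simps)
qed

lemma dyadic_floor_tendsto: "(\<lambda>n. dyadic_floor n x) \<longlonglongrightarrow> x"
proof (rule real_tendsto_sandwich)
  show "(\<lambda>n. x - 1 / 2^n) \<longlonglongrightarrow> x"
    using tendsto_diff[OF tendsto_const LIMSEQ_divide_realpow_zero[of 2 1]] by simp
  show "\<forall>\<^sub>F n in sequentially. x - 1 / 2^n \<le> dyadic_floor n x"
    using less_dyadic_floor_add[of x] by (auto intro!: eventuallyI less_imp_le simp: algebra_simps)
  show "\<forall>\<^sub>F n in sequentially. dyadic_floor n x \<le> x" by (simp add: dyadic_floor_le)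
qed simp

lemma dyadic_floor_bounds:
  assumes "\<bar>x\<bar> \<le> B"
  shows "- B - 1 \<le> dyadic_floor n x" "dyadic_floor n x \<le> B"
proof -
  have "1 / 2^n \<le> (1::real)" by simp
  then show "- B - 1 \<le> dyadic_floor n x" using less_dyadic_floor_add[of x n] assms by linarith
  show "dyadic_floor n x \<le> B" using dyadic_floor_le[of n x] assms by linarith
qed

lemma measurable_dyadic_floor[measurable]: "dyadic_floor n \<in> borel_measurable borel"
  unfolding dyadic_floor_def by measurable

lemma floor_mult_pow2_bounds:
  fixes x B :: real
  assumes "\<bar>x\<bar> \<le> B"
  shows "- \<lceil>B\<rceil> * 2^n \<le> \<lfloor>x * 2^n\<rfloor>" "\<lfloor>x * 2^n\<rfloor> \<le> \<lceil>B\<rceil> * 2^n"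
proof -
  have B: "- of_int \<lceil>B\<rceil> \<le> x" "x \<le> of_int \<lceil>B\<rceil>" using assms le_of_int_ceiling[of B] by linarith+
  have "of_int (- \<lceil>B\<rceil> * 2^n) \<le> x * (2::real)^n" using mult_right_mono[OF B(1), of "2^n"] by simp
  then show "- \<lceil>B\<rceil> * 2^n \<le> \<lfloor>x * 2^n\<rfloor>" by (simp only: le_floor_iff)
  have "x * (2::real)^n \<le> of_int (\<lceil>B\<rceil> * 2^n)" using mult_right_mono[OF B(2), of "2^n"] by simp
  then show "\<lfloor>x * 2^n\<rfloor> \<le> \<lceil>B\<rceil> * 2^n" by (simp only: floor_le_iff)
qed

lemma indicator_mult_dyadic_floor_eq_sum:
  fixes F :: "real \<Rightarrow> real"
  assumes "\<omega> \<in> S" and "\<bar>h \<omega>\<bar> \<le> B"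
  shows "indicator A \<omega> * F (dyadic_floor n (h \<omega>)) =
    (\<Sum>k\<in>{- \<lceil>B\<rceil> * 2^n..\<lceil>B\<rceil> * 2^n}.
       indicator (A \<inter> {\<omega>\<in>S. \<lfloor>h \<omega> * 2^n\<rfloor> = k}) \<omega> * F (of_int k / 2^n))"
proof -
  define k0 where "k0 = \<lfloor>h \<omega> * 2^n\<rfloor>"
  have "(\<Sum>k\<in>{- \<lceil>B\<rceil> * 2^n..\<lceil>B\<rceil> * 2^n}.
       indicator (A \<inter> {\<omega>\<in>S. \<lfloor>h \<omega> * 2^n\<rfloor> = k}) \<omega> * F (of_int k / 2^n))
      = (\<Sum>k\<in>{- \<lceil>B\<rceil> * 2^n..\<lceil>B\<rceil> * 2^n}. if k0 = k then indicator A \<omega> * F (of_int k / 2^n) else 0)"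
    using assms(1) unfolding k0_def by (intro sum.cong refl) (auto simp: indicator_def)
  also have "\<dots> = indicator A \<omega> * F (of_int k0 / 2^n)"
    using floor_mult_pow2_bounds[OF assms(2), of n] unfolding k0_def by (subst sum.delta') auto
  finally show ?thesis unfolding dyadic_floor_def k0_def by simp
qed

definition dyadic_grid :: "nat \<Rightarrow> nat \<Rightarrow> nat \<Rightarrow> real" where
  "dyadic_grid K n i = - real K + real i / 2^n"

lemma dyadic_grid_0: "dyadic_grid K n 0 = - real K"
  unfolding dyadic_grid_def by simp

lemma dyadic_grid_top: "dyadic_grid K n (2 * K * 2^n) = real K"
  unfolding dyadic_grid_def by simp

lemma dyadic_grid_Suc: "dyadic_grid K n (Suc i) = dyadic_grid K n i + 1 / 2^n"
  unfolding dyadic_grid_def by (simp add: field_simps)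

lemma dyadic_grid_mono: "dyadic_grid K n i \<le> dyadic_grid K n (Suc i)"
  unfolding dyadic_grid_Suc by simp

lemma dyadic_grid_in_Rats: "dyadic_grid K n i \<in> \<rat>"
  unfolding dyadic_grid_def by simp

lemma dyadic_grid_mem:
  assumes "i \<le> 2 * K * 2^n"
  shows "dyadic_grid K n i \<in> {- real K..real K}"
proof -
  have "real i \<le> real (2 * K * 2^n)" using assms by (simp only: of_nat_le_iff)
  then have "real i / 2^n \<le> 2 * real K" by (simp add: divide_le_eq)
  then show ?thesis unfolding dyadic_grid_def by auto
qed

lemma dyadic_grid_window:
  assumes "\<bar>x\<bar> + 2 \<le> real K"
  obtains i where "i + 3 \<le> 2 * K * 2^n"
    and "\<And>z. \<bar>z - x\<bar> < 1 / 2^n \<Longrightarrow> dyadic_grid K n i \<le> dyadic_floor n z"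
    and "\<And>z. \<bar>z - x\<bar> < 1 / 2^n \<Longrightarrow> z < dyadic_grid K n (i + 3)"
proof
  define j where "j = \<lfloor>x * 2^n\<rfloor>"
  have p: "(1::real) \<le> 2^n" by simp
  have j: "of_int j \<le> x * 2^n" "x * 2^n < of_int j + 1" unfolding j_def by linarith+
  have xK: "- (real K - 2) * 2^n \<le> x * 2^n" "x * 2^n \<le> (real K - 2) * 2^n"
    using assms by (intro mult_right_mono; simp)+
  have "2 * 2^n \<le> x * 2^n + real K * 2^n" using xK(1) by (simp add: algebra_simps)
  then have "real_of_int (j - 1 + int K * 2^n) > - 1" using j by simp (use p in linarith)
  then have nonneg: "0 \<le> j - 1 + int K * 2^n" by linarith
  define i where "i = nat (j - 1 + int K * 2^n)"
  have i: "real i = of_int j - 1 + real K * 2^n"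
    unfolding i_def using nonneg by (simp only: of_nat_nat) simp
  have "real (i + 3) \<le> real (2 * K * 2^n)" using i j xK by (simp add: algebra_simps) (use p in linarith)
  then show "i + 3 \<le> 2 * K * 2^n" by (simp only: of_nat_le_iff)
  have grid_i: "dyadic_grid K n i = (of_int j - 1) / 2^n"
    unfolding dyadic_grid_def i by (simp add: field_simps)
  have grid_i3: "dyadic_grid K n (i + 3) = (of_int j + 2) / 2^n"
    unfolding dyadic_grid_def by (simp add: i field_simps)
  fix z assume z: "\<bar>z - x\<bar> < 1 / 2^n"
  then have z1: "x * 2^n - 1 < z * 2^n" "z * 2^n < x * 2^n + 1"
    by (simp_all add: abs_less_iff field_simps)
  then have "j - 1 \<le> \<lfloor>z * 2^n\<rfloor>" using j by (simp add: le_floor_iff)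
  then show "dyadic_grid K n i \<le> dyadic_floor n z"
    unfolding grid_i dyadic_floor_def by (simp add: divide_right_mono)
  show "z < dyadic_grid K n (i + 3)"
    unfolding grid_i3 using z1 j by (simp add: less_divide_eq)
qed

lemma sum_selected_increments_le:
  fixes a :: "nat \<Rightarrow> real"
  assumes "\<And>i. a i \<le> a (Suc i)"
  shows "(\<Sum>i<N. if P i then a (Suc i) - a i else 0) \<le> (if \<exists>i<N. P i then a N - a 0 else 0)"
proof (cases "\<exists>i<N. P i")
  case True
  have "(\<Sum>i<N. if P i then a (Suc i) - a i else 0) \<le> (\<Sum>i<N. a (Suc i) - a i)"
    using assms by (intro sum_mono) auto
  also have "\<dots> = a N - a 0" by (rule sum_lessThan_telescope)
  finally show ?thesis using True by simp
qed auto

section \<open>Regular families\<close>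

lemma Inf_superlevel_eq_INF_rat:
  fixes U :: "real \<Rightarrow> real"
  assumes "strict_mono U"
  shows "Inf (ereal ` {y. U y > x}) = (INF r::rat. if U (of_rat r) > x then ereal (of_rat r) else \<infinity>)"
proof (rule antisym)
  show "Inf (ereal ` {y. U y > x}) \<le> (INF r::rat. if U (of_rat r) > x then ereal (of_rat r) else \<infinity>)"
    by (rule INF_greatest) (auto intro: Inf_lower)
  show "(INF r::rat. if U (of_rat r) > x then ereal (of_rat r) else \<infinity>) \<le> Inf (ereal ` {y. U y > x})"
  proof (rule Inf_greatest)
    fix z assume "z \<in> ereal ` {y. U y > x}"
    then obtain y where y: "U y > x" and z: "z = ereal y" by auto
    show "(INF r::rat. if U (of_rat r) > x then ereal (of_rat r) else \<infinity>) \<le> z"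
      unfolding z
    proof (rule ereal_le_epsilon2)
      fix e :: real assume "0 < e"
      then obtain q where q: "q \<in> \<rat>" "y < q" "q < y + e" using Rats_dense_in_real[of y "y + e"] by auto
      then obtain r where r: "q = of_rat r" using Rats_cases by blast
      have "U y < U q" using assms q(2) by (simp add: strict_mono_less)
      then have "(INF r::rat. if U (of_rat r) > x then ereal (of_rat r) else \<infinity>) \<le> ereal (of_rat r)"
        using y r by (intro INF_lower2[of r]) auto
      also have "\<dots> \<le> ereal y + ereal e" using q r by simp
      finally show "(INF r::rat. if U (of_rat r) > x then ereal (of_rat r) else \<infinity>) \<le> ereal y + ereal e" .
    qed
  qed
qed

lemma Inf_superlevel_at_value:
  fixes U :: "real \<Rightarrow> real"
  assumes "strict_mono U"
  shows "Inf (ereal ` {y. U y > U z}) = ereal z"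
proof -
  have "{y. U y > U z} = {z<..}" using assms by (auto simp: strict_mono_less)
  moreover have "Inf (ereal ` {z<..}) = ereal (Inf {z<..})"
    by (rule ereal_Inf'[symmetric]) auto
  ultimately show ?thesis by simp
qed

lemma regular_less: "regular M \<phi> \<Longrightarrow> \<omega> \<in> space M \<Longrightarrow> x < y \<Longrightarrow> \<phi> \<omega> x < \<phi> \<omega> y"
  unfolding regular_def strict_mono_def by blast

lemma regular_le: "regular M \<phi> \<Longrightarrow> \<omega> \<in> space M \<Longrightarrow> x \<le> y \<Longrightarrow> \<phi> \<omega> x \<le> \<phi> \<omega> y"
  using regular_less[of M \<phi> \<omega> x y] by (auto simp: order.order_iff_strict)

lemma regular_le_iff: "regular M \<phi> \<Longrightarrow> \<omega> \<in> space M \<Longrightarrow> \<phi> \<omega> x \<le> \<phi> \<omega> y \<longleftrightarrow> x \<le> y"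
  unfolding regular_def by (auto simp: strict_mono_less_eq)

lemma regular_zero: "regular M \<phi> \<Longrightarrow> \<omega> \<in> space M \<Longrightarrow> \<phi> \<omega> 0 = 0"
  unfolding regular_def by blast

lemma regular_isCont: "regular M \<phi> \<Longrightarrow> \<omega> \<in> space M \<Longrightarrow> isCont (\<phi> \<omega>) x"
  unfolding regular_def by (auto simp: continuous_on_eq_continuous_at)

lemma regular_measurable_comp:
  assumes "regular M \<phi>" and [measurable]: "g \<in> borel_measurable M"
  shows "(\<lambda>\<omega>. \<phi> \<omega> (g \<omega>)) \<in> borel_measurable M"
proof -
  have "(\<lambda>\<omega>. (\<omega>, g \<omega>)) \<in> measurable M (M \<Otimes>\<^sub>M borel)" by measurable
  moreover have "case_prod \<phi> \<in> borel_measurable (M \<Otimes>\<^sub>M borel)"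
    using assms(1) unfolding regular_def by blast
  ultimately show ?thesis using measurable_comp by (fastforce simp: o_def)
qed

lemma regular_cong_sets:
  assumes "sets M = sets N" and "regular M \<phi>"
  shows "regular N \<phi>"
proof -
  have "sets (M \<Otimes>\<^sub>M (borel :: real measure)) = sets (N \<Otimes>\<^sub>M borel)"
    by (rule sets_pair_measure_cong[OF assms(1) refl])
  then show ?thesis
    using assms sets_eq_imp_space_eq[OF assms(1)] measurable_cong_sets
    unfolding regular_def by blast
qed

lemma regular_subalgebra:
  assumes sub: "subalgebra M G" and "regular G \<phi>"
  shows "regular M \<phi>"
proof -
  have "(\<lambda>\<omega>. \<omega>) \<in> measurable M G"
    by (rule measurable_from_subalg[OF sub measurable_ident_sets[OF refl]])
  then have "(\<lambda>p. (fst p, snd p)) \<in> measurable (M \<Otimes>\<^sub>M borel) (G \<Otimes>\<^sub>M (borel :: real measure))"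
    by (intro measurable_Pair measurable_compose[OF measurable_fst]) simp_all
  moreover have "case_prod \<phi> \<in> borel_measurable (G \<Otimes>\<^sub>M borel)"
    using assms(2) unfolding regular_def by blast
  ultimately have "case_prod \<phi> \<in> borel_measurable (M \<Otimes>\<^sub>M borel)"
    using measurable_comp by (fastforce simp: o_def case_prod_beta')
  then show ?thesis using assms sub unfolding regular_def subalgebra_def by simp
qed

lemma regular_integrable_comp:
  assumes reg: "regular M \<phi>" and int: "\<And>x. integrable M (\<lambda>\<omega>. \<phi> \<omega> x)"
    and g[measurable]: "g \<in> borel_measurable M" and bnd: "\<And>\<omega>. \<omega> \<in> space M \<Longrightarrow> \<bar>g \<omega>\<bar> \<le> B"
  shows "integrable M (\<lambda>\<omega>. \<phi> \<omega> (g \<omega>))"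
proof (rule Bochner_Integration.integrable_bound)
  show "integrable M (\<lambda>\<omega>. \<bar>\<phi> \<omega> (- B)\<bar> + \<bar>\<phi> \<omega> B\<bar>)" using int by auto
  show "(\<lambda>\<omega>. \<phi> \<omega> (g \<omega>)) \<in> borel_measurable M" by (rule regular_measurable_comp[OF reg g])
  show "AE \<omega> in M. norm (\<phi> \<omega> (g \<omega>)) \<le> norm (\<bar>\<phi> \<omega> (- B)\<bar> + \<bar>\<phi> \<omega> B\<bar>)"
  proof (rule AE_I2)
    fix \<omega> assume \<omega>: "\<omega> \<in> space M"
    have "\<phi> \<omega> (- B) \<le> \<phi> \<omega> (g \<omega>)" "\<phi> \<omega> (g \<omega>) \<le> \<phi> \<omega> B"
      using bnd[OF \<omega>] by (auto intro!: regular_le[OF reg \<omega>])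
    then show "norm (\<phi> \<omega> (g \<omega>)) \<le> norm (\<bar>\<phi> \<omega> (- B)\<bar> + \<bar>\<phi> \<omega> B\<bar>)" by auto
  qed
qed

lemma set_integral_dyadic_floor_tendsto:
  assumes reg: "regular M \<phi>" and int: "\<And>x. integrable M (\<lambda>\<omega>. \<phi> \<omega> x)"
    and h[measurable]: "h \<in> borel_measurable M" and bnd: "\<And>\<omega>. \<omega> \<in> space M \<Longrightarrow> \<bar>h \<omega>\<bar> \<le> B"
    and A[measurable]: "A \<in> sets M"
  shows "(\<lambda>n. \<integral>\<omega>\<in>A. \<phi> \<omega> (dyadic_floor n (h \<omega>)) \<partial>M) \<longlonglongrightarrow> (\<integral>\<omega>\<in>A. \<phi> \<omega> (h \<omega>) \<partial>M)"
  unfolding set_lebesgue_integral_def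
proof (rule integral_dominated_convergence[where w="\<lambda>\<omega>. \<bar>\<phi> \<omega> (- B - 1)\<bar> + \<bar>\<phi> \<omega> B\<bar>"])
  note [measurable] = regular_measurable_comp[OF reg]
  show "(\<lambda>\<omega>. indicator A \<omega> *\<^sub>R \<phi> \<omega> (h \<omega>)) \<in> borel_measurable M" by measurable
  show "(\<lambda>\<omega>. indicator A \<omega> *\<^sub>R \<phi> \<omega> (dyadic_floor n (h \<omega>))) \<in> borel_measurable M" for n
    by measurable
  show "integrable M (\<lambda>\<omega>. \<bar>\<phi> \<omega> (- B - 1)\<bar> + \<bar>\<phi> \<omega> B\<bar>)" using int by auto
  show "AE \<omega> in M. (\<lambda>n. indicator A \<omega> *\<^sub>R \<phi> \<omega> (dyadic_floor n (h \<omega>)))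
      \<longlonglongrightarrow> indicator A \<omega> *\<^sub>R \<phi> \<omega> (h \<omega>)"
    by (intro AE_I2 tendsto_scaleR tendsto_const
        isCont_tendsto_compose[OF regular_isCont[OF reg] dyadic_floor_tendsto])
  show "AE \<omega> in M. norm (indicator A \<omega> *\<^sub>R \<phi> \<omega> (dyadic_floor n (h \<omega>)))
      \<le> \<bar>\<phi> \<omega> (- B - 1)\<bar> + \<bar>\<phi> \<omega> B\<bar>" for n
  proof (rule AE_I2)
    fix \<omega> assume \<omega>: "\<omega> \<in> space M"
    have "\<phi> \<omega> (- B - 1) \<le> \<phi> \<omega> (dyadic_floor n (h \<omega>))" "\<phi> \<omega> (dyadic_floor n (h \<omega>)) \<le> \<phi> \<omega> B"
      using dyadic_floor_bounds[OF bnd[OF \<omega>]] by (auto intro!: regular_le[OF reg \<omega>])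
    then show "norm (indicator A \<omega> *\<^sub>R \<phi> \<omega> (dyadic_floor n (h \<omega>))) \<le> \<bar>\<phi> \<omega> (- B - 1)\<bar> + \<bar>\<phi> \<omega> B\<bar>"
      by (auto simp: indicator_def)
  qed
qed

lemma set_integral_dyadic_floor_eq:
  fixes \<phi> \<psi> :: "'a \<Rightarrow> real \<Rightarrow> real"
  assumes sub: "subalgebra M G"
    and int: "\<And>x. integrable M (\<lambda>\<omega>. \<phi> \<omega> x)" "\<And>x. integrable M (\<lambda>\<omega>. \<psi> \<omega> x)"
    and eq: "\<And>C x. C \<in> sets G \<Longrightarrow> (\<integral>\<omega>\<in>C. \<phi> \<omega> x \<partial>M) = (\<integral>\<omega>\<in>C. \<psi> \<omega> x \<partial>M)"
    and h[measurable]: "h \<in> borel_measurable G" and bnd: "\<And>\<omega>. \<omega> \<in> space M \<Longrightarrow> \<bar>h \<omega>\<bar> \<le> B"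
    and A: "A \<in> sets G"
  shows "(\<integral>\<omega>\<in>A. \<phi> \<omega> (dyadic_floor n (h \<omega>)) \<partial>M) = (\<integral>\<omega>\<in>A. \<psi> \<omega> (dyadic_floor n (h \<omega>)) \<partial>M)"
proof -
  define Ks where "Ks = {- \<lceil>B\<rceil> * 2^n..\<lceil>B\<rceil> * 2^n}"
  define C where "C k = A \<inter> {\<omega>\<in>space M. \<lfloor>h \<omega> * 2^n\<rfloor> = k}" for k :: int
  have space: "space G = space M" using sub by (simp add: subalgebra_def)
  have CG: "C k \<in> sets G" for k
  proof -
    have "{\<omega>\<in>space G. \<lfloor>h \<omega> * 2^n\<rfloor> = k} \<in> sets G" by measurable
    then show ?thesis unfolding C_def space[symmetric] using A by auto
  qed
  have CM: "C k \<in> sets M" for k using CG sub by (auto simp: subalgebra_def)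
  have step: "(\<integral>\<omega>\<in>A. \<xi> \<omega> (dyadic_floor n (h \<omega>)) \<partial>M)
      = (\<Sum>k\<in>Ks. \<integral>\<omega>\<in>C k. \<xi> \<omega> (of_int k / 2^n) \<partial>M)"
    if "\<And>x. integrable M (\<lambda>\<omega>. \<xi> \<omega> x)" for \<xi> :: "'a \<Rightarrow> real \<Rightarrow> real"
  proof -
    have "(\<integral>\<omega>\<in>A. \<xi> \<omega> (dyadic_floor n (h \<omega>)) \<partial>M)
        = (\<integral>\<omega>. (\<Sum>k\<in>Ks. indicator (C k) \<omega> * \<xi> \<omega> (of_int k / 2^n)) \<partial>M)"
      unfolding set_lebesgue_integral_def real_scaleR_def Ks_def C_def
      by (intro Bochner_Integration.integral_cong refl indicator_mult_dyadic_floor_eq_sum bnd)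
    also have "\<dots> = (\<Sum>k\<in>Ks. \<integral>\<omega>\<in>C k. \<xi> \<omega> (of_int k / 2^n) \<partial>M)"
      unfolding set_lebesgue_integral_def real_scaleR_def
      using integrable_mult_indicator[OF CM that] by (simp add: Bochner_Integration.integral_sum)
    finally show ?thesis .
  qed
  show ?thesis unfolding step[where \<xi>=\<phi>, OF int(1)] step[where \<xi>=\<psi>, OF int(2)]
    by (simp add: eq[OF CG])
qed

lemma set_integral_comp_eq_of_set_integral_eq:
  fixes \<phi> \<psi> :: "'a \<Rightarrow> real \<Rightarrow> real"
  assumes sub: "subalgebra M G"
    and reg: "regular M \<phi>" "regular M \<psi>"
    and int: "\<And>x. integrable M (\<lambda>\<omega>. \<phi> \<omega> x)" "\<And>x. integrable M (\<lambda>\<omega>. \<psi> \<omega> x)"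
    and eq: "\<And>C x. C \<in> sets G \<Longrightarrow> (\<integral>\<omega>\<in>C. \<phi> \<omega> x \<partial>M) = (\<integral>\<omega>\<in>C. \<psi> \<omega> x \<partial>M)"
    and h: "h \<in> borel_measurable G" and bnd: "\<And>\<omega>. \<omega> \<in> space M \<Longrightarrow> \<bar>h \<omega>\<bar> \<le> B"
    and A: "A \<in> sets G"
  shows "(\<integral>\<omega>\<in>A. \<phi> \<omega> (h \<omega>) \<partial>M) = (\<integral>\<omega>\<in>A. \<psi> \<omega> (h \<omega>) \<partial>M)"
proof -
  have hM: "h \<in> borel_measurable M" by (rule measurable_from_subalg[OF sub h])
  have AM: "A \<in> sets M" using A sub by (auto simp: subalgebra_def)
  have "(\<lambda>n. \<integral>\<omega>\<in>A. \<phi> \<omega> (dyadic_floor n (h \<omega>)) \<partial>M) \<longlonglongrightarrow> (\<integral>\<omega>\<in>A. \<phi> \<omega> (h \<omega>) \<partial>M)"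
    using reg(1) int(1) hM bnd AM by (rule set_integral_dyadic_floor_tendsto)
  then have "(\<lambda>n. \<integral>\<omega>\<in>A. \<psi> \<omega> (dyadic_floor n (h \<omega>)) \<partial>M) \<longlonglongrightarrow> (\<integral>\<omega>\<in>A. \<phi> \<omega> (h \<omega>) \<partial>M)"
    by (simp only: set_integral_dyadic_floor_eq[where \<phi>=\<phi> and \<psi>=\<psi>, OF sub int eq h bnd A])
  moreover have "(\<lambda>n. \<integral>\<omega>\<in>A. \<psi> \<omega> (dyadic_floor n (h \<omega>)) \<partial>M) \<longlonglongrightarrow> (\<integral>\<omega>\<in>A. \<psi> \<omega> (h \<omega>) \<partial>M)"
    using reg(2) int(2) hM bnd AM by (rule set_integral_dyadic_floor_tendsto)
  ultimately show ?thesis by (rule LIMSEQ_unique)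
qed

lemma regular_measurable_inverse:
  assumes reg: "regular G \<phi>" and c[measurable]: "c \<in> borel_measurable G" and "0 \<le> B"
    and range: "\<And>\<omega>. \<omega> \<in> space G \<Longrightarrow> \<phi> \<omega> (- B) \<le> c \<omega> \<and> c \<omega> \<le> \<phi> \<omega> B"
  obtains h where "h \<in> borel_measurable G"
    and "\<And>\<omega>. \<omega> \<in> space G \<Longrightarrow> \<bar>h \<omega>\<bar> \<le> B \<and> \<phi> \<omega> (h \<omega>) = c \<omega>"
proof
  define h where "h \<omega> = (SOME y. - B \<le> y \<and> y \<le> B \<and> \<phi> \<omega> y = c \<omega>)" for \<omega>
  have h: "- B \<le> h \<omega> \<and> h \<omega> \<le> B \<and> \<phi> \<omega> (h \<omega>) = c \<omega>" if \<omega>: "\<omega> \<in> space G" for \<omega>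
  proof -
    have "\<exists>y\<ge>- B. y \<le> B \<and> \<phi> \<omega> y = c \<omega>"
      using range[OF \<omega>] \<open>0 \<le> B\<close> regular_isCont[OF reg \<omega>]
      by (intro IVT') (auto intro: continuous_at_imp_continuous_on)
    then have "\<exists>y. - B \<le> y \<and> y \<le> B \<and> \<phi> \<omega> y = c \<omega>" by blast
    then show ?thesis unfolding h_def by (rule someI_ex)
  qed
  then show "\<bar>h \<omega>\<bar> \<le> B \<and> \<phi> \<omega> (h \<omega>) = c \<omega>" if "\<omega> \<in> space G" for \<omega>
    using that by fastforce
  show "h \<in> borel_measurable G"
  proof (subst borel_measurable_iff_le, intro allI)
    fix t
    have "{\<omega>\<in>space G. h \<omega> \<le> t} = {\<omega>\<in>space G. c \<omega> \<le> \<phi> \<omega> t}"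
      using h regular_le_iff[OF reg] by (intro Collect_cong conj_cong refl) metis
    also have "\<dots> \<in> sets G"
      using regular_measurable_comp[OF reg, of "\<lambda>_. t"] by measurable
    finally show "{\<omega>\<in>space G. h \<omega> \<le> t} \<in> sets G" .
  qed
qed

lemma cond_exp_version_cong:
  assumes "cond_exp_version P G X g" and "g' \<in> borel_measurable G"
    and "\<And>\<omega>. \<omega> \<in> space P \<Longrightarrow> g \<omega> = g' \<omega>"
  shows "cond_exp_version P G X g'"
proof -
  have "integrable P g'"
    using assms Bochner_Integration.integrable_cong[where M=P and N=P and f=g and g=g']
    unfolding cond_exp_version_def by simp
  moreover have "(\<integral>\<omega>\<in>A. g' \<omega> \<partial>P) = (\<integral>\<omega>\<in>A. g \<omega> \<partial>P)" for A
    unfolding set_lebesgue_integral_def using assms(3)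
    by (intro Bochner_Integration.integral_cong) simp_all
  ultimately show ?thesis using assms unfolding cond_exp_version_def by simp
qed

lemma Linf_subalgebra:
  assumes "subalgebra M G" and "h \<in> Linf G"
  shows "h \<in> Linf M"
proof -
  have "space G = space M" using assms(1) by (simp add: subalgebra_def)
  then show ?thesis
    using assms(2) measurable_from_subalg[OF assms(1)] unfolding Linf_def by auto
qed

lemma Linf_mult_indicator:
  assumes "f \<in> Linf M" and "A \<in> sets M"
  shows "(\<lambda>\<omega>. f \<omega> * indicator A \<omega>) \<in> Linf M"
proof -
  obtain B where "f \<in> borel_measurable M" "\<And>\<omega>. \<omega> \<in> space M \<Longrightarrow> \<bar>f \<omega>\<bar> \<le> B"
    using assms(1) unfolding Linf_def by blast
  moreover have "\<bar>f \<omega> * indicator A \<omega>\<bar> \<le> \<bar>f \<omega>\<bar>" for \<omega>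
    by (simp add: indicator_def)
  ultimately show ?thesis
    using assms(2) unfolding Linf_def by (auto intro: order_trans)
qed

lemma mem_chisiniI:
  fixes u :: "'a \<Rightarrow> real \<Rightarrow> real"
  assumes repr: "\<And>f g. f \<in> Linf M \<Longrightarrow> g \<in> Linf M \<Longrightarrow>
        R f g \<longleftrightarrow> (\<integral>\<omega>. u \<omega> (f \<omega>) \<partial>P) \<ge> (\<integral>\<omega>. u \<omega> (g \<omega>) \<partial>P)"
    and space: "space P = space M" and u0: "\<And>\<omega>. \<omega> \<in> space M \<Longrightarrow> u \<omega> 0 = 0"
    and sub: "subalgebra M G" and f: "f \<in> Linf M" and h: "h \<in> Linf G"
    and eq: "\<And>A. A \<in> sets G \<Longrightarrow> (\<integral>\<omega>\<in>A. u \<omega> (f \<omega>) \<partial>P) = (\<integral>\<omega>\<in>A. u \<omega> (h \<omega>) \<partial>P)"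
  shows "h \<in> chisini G R f"
  unfolding chisini_def
proof (intro CollectI conjI ballI h)
  fix A assume A: "A \<in> sets G"
  then have AM: "A \<in> sets M" using sub by (auto simp: subalgebra_def)
  have restrict: "(\<integral>\<omega>. u \<omega> (g \<omega> * indicator A \<omega>) \<partial>P) = (\<integral>\<omega>\<in>A. u \<omega> (g \<omega>) \<partial>P)" for g
    unfolding set_lebesgue_integral_def using u0 space
    by (intro Bochner_Integration.integral_cong) (auto simp: indicator_def)
  have fA: "(\<lambda>\<omega>. f \<omega> * indicator A \<omega>) \<in> Linf M"
    by (rule Linf_mult_indicator[OF f AM])
  have hA: "(\<lambda>\<omega>. h \<omega> * indicator A \<omega>) \<in> Linf M"
    by (rule Linf_mult_indicator[OF Linf_subalgebra[OF sub h] AM])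
  show "pindiff R (\<lambda>\<omega>. f \<omega> * indicator A \<omega>) (\<lambda>\<omega>. h \<omega> * indicator A \<omega>)"
    unfolding pindiff_def repr[OF fA hA] repr[OF hA fA] restrict eq[OF A] by simp
qed

section \<open>A regular version of the conditional utility\<close>

locale cond_utility = prob_space P + finite_measure_subalgebra P G
  for P G :: "'a measure" +
  fixes u :: "'a \<Rightarrow> real \<Rightarrow> real"
  assumes regular_u: "regular P u"
    and integrable_u: "\<And>x. integrable P (\<lambda>\<omega>. u \<omega> x)"
begin

lemma space_G: "space G = space P"
  using subalg by (simp add: subalgebra_def)

lemma sets_G_subset: "A \<in> sets G \<Longrightarrow> A \<in> sets P"
  using subalg by (auto simp: subalgebra_def)

lemma measurable_G_imp_P: "f \<in> borel_measurable G \<Longrightarrow> f \<in> borel_measurable P"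
  by (rule measurable_from_subalg[OF subalg])

lemma measurable_u[measurable]: "(\<lambda>\<omega>. u \<omega> x) \<in> borel_measurable P"
  using regular_measurable_comp[OF regular_u, of "\<lambda>_. x"] by simp

definition ucond :: "real \<Rightarrow> 'a \<Rightarrow> real" where
  "ucond q = real_cond_exp P G (\<lambda>\<omega>. u \<omega> q)"

lemma measurable_ucond[measurable]: "ucond q \<in> borel_measurable G"
  unfolding ucond_def by simp

lemma measurable_ucond_P[measurable]: "ucond q \<in> borel_measurable P"
  unfolding ucond_def by simp

lemma integrable_ucond: "integrable P (ucond q)"
  unfolding ucond_def by (rule real_cond_exp_int(1)[OF integrable_u])

lemma set_integral_ucond: "A \<in> sets G \<Longrightarrow> (\<integral>\<omega>\<in>A. ucond q \<omega> \<partial>P) = (\<integral>\<omega>\<in>A. u \<omega> q \<partial>P)"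
  unfolding ucond_def by (rule real_cond_exp_intA[OF integrable_u, symmetric])

lemma AE_ucond_less: "a < b \<Longrightarrow> AE \<omega> in P. ucond a \<omega> < ucond b \<omega>"
  unfolding ucond_def
  by (rule real_cond_exp_mono_strict[OF AE_I2 integrable_u integrable_u])
    (rule regular_less[OF regular_u])

lemma AE_ucond_zero: "AE \<omega> in P. ucond 0 \<omega> = 0"
  unfolding ucond_def
proof (rule real_cond_exp_charact)
  fix A assume "A \<in> sets G"
  then show "(\<integral>\<omega>\<in>A. u \<omega> 0 \<partial>P) = (\<integral>\<omega>\<in>A. 0 \<partial>P)"
    using sets.sets_into_space[OF sets_G_subset] regular_zero[OF regular_u]
    by (intro set_lebesgue_integral_cong) (auto simp: sets_G_subset)
qed (auto simp: integrable_u)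

text \<open>Markov's inequality for the increment of \<open>ucond\<close>, after splitting the increment of \<open>u\<close>
  at the level \<open>e/2\<close>.\<close>

lemma measure_ucond_increment_le:
  assumes ab: "a \<le> b" and e: "e > 0"
  shows "e / 2 * measure P {\<omega>\<in>space P. e \<le> ucond b \<omega> - ucond a \<omega>}
     \<le> (\<integral>\<omega>\<in>{\<omega>\<in>space P. e / 2 \<le> u \<omega> b - u \<omega> a}. u \<omega> b - u \<omega> a \<partial>P)"
proof -
  define S where "S = {\<omega>\<in>space P. e \<le> ucond b \<omega> - ucond a \<omega>}"
  define T where "T = {\<omega>\<in>space P. e / 2 \<le> u \<omega> b - u \<omega> a}"
  have SG: "S \<in> sets G" unfolding S_def space_G[symmetric] by measurable
  then have SP: "S \<in> sets P" by (rule sets_G_subset)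
  have TP: "T \<in> sets P" unfolding T_def by measurable
  have set_int: "set_integrable P A f" if "A \<in> sets P" "integrable P f" for A and f :: "'a \<Rightarrow> real"
    unfolding set_integrable_def by (rule integrable_mult_indicator[OF that])
  have int_u: "integrable P (\<lambda>\<omega>. u \<omega> b - u \<omega> a)" using integrable_u by auto
  have int_ucond: "integrable P (\<lambda>\<omega>. ucond b \<omega> - ucond a \<omega>)" using integrable_ucond by auto
  have "measure P S * e = (\<integral>\<omega>\<in>S. e \<partial>P)"
    using sets.sets_into_space[OF SP] by (simp add: set_lebesgue_integral_def Int_absorb2)
  also have "\<dots> \<le> (\<integral>\<omega>\<in>S. ucond b \<omega> - ucond a \<omega> \<partial>P)"
    using set_int[OF SP int_ucond] set_int[OF SP, of "\<lambda>_. e"]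
    by (intro set_integral_mono) (auto simp: S_def)
  also have "\<dots> = (\<integral>\<omega>\<in>S. u \<omega> b - u \<omega> a \<partial>P)"
    using set_int[OF SP integrable_ucond] set_int[OF SP integrable_u]
    by (simp add: set_integral_diff(2) set_integral_ucond[OF SG])
  also have "\<dots> \<le> (\<integral>\<omega>. indicator T \<omega> * (u \<omega> b - u \<omega> a) + indicator S \<omega> * (e / 2) \<partial>P)"
    unfolding set_lebesgue_integral_def real_scaleR_def
  proof (rule integral_mono)
    fix \<omega> assume \<omega>: "\<omega> \<in> space P"
    have "u \<omega> a \<le> u \<omega> b" by (rule regular_le[OF regular_u \<omega> ab])
    then show "indicator S \<omega> * (u \<omega> b - u \<omega> a) \<le> indicator T \<omega> * (u \<omega> b - u \<omega> a) + indicator S \<omega> * (e / 2)"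
      using \<omega> e by (auto simp: T_def indicator_def)
  qed (use set_int[OF SP int_u] set_int[OF TP int_u] set_int[OF SP, of "\<lambda>_. e / 2"]
       in \<open>auto simp: set_integrable_def\<close>)
  also have "\<dots> = (\<integral>\<omega>\<in>T. u \<omega> b - u \<omega> a \<partial>P) + measure P S * (e / 2)"
    using set_int[OF TP int_u] set_int[OF SP, of "\<lambda>_. e / 2"] sets.sets_into_space[OF SP]
    by (simp add: set_integrable_def set_lebesgue_integral_def Int_absorb2)
  finally show ?thesis unfolding S_def[symmetric] T_def[symmetric] by (simp add: algebra_simps)
qed

definition u_jumps :: "nat \<Rightarrow> nat \<Rightarrow> real \<Rightarrow> 'a set" where
  "u_jumps K n e = {\<omega>\<in>space P. \<exists>i<2 * K * 2^n.
     e \<le> u \<omega> (dyadic_grid K n (Suc i)) - u \<omega> (dyadic_grid K n i)}"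

definition ucond_jumps :: "nat \<Rightarrow> nat \<Rightarrow> real \<Rightarrow> 'a set" where
  "ucond_jumps K n e = {\<omega>\<in>space P. \<exists>i<2 * K * 2^n.
     e \<le> ucond (dyadic_grid K n (Suc i)) \<omega> - ucond (dyadic_grid K n i) \<omega>}"

lemma u_jumps_sets[measurable]: "u_jumps K n e \<in> sets P"
  unfolding u_jumps_def by measurable

lemma ucond_jumps_sets[measurable]: "ucond_jumps K n e \<in> sets P"
  unfolding ucond_jumps_def by measurable

lemma sum_u_increments_le:
  assumes "\<omega> \<in> space P"
  shows "(\<Sum>i<2 * K * 2^n. indicator {\<omega>\<in>space P. e \<le> u \<omega> (dyadic_grid K n (Suc i)) - u \<omega> (dyadic_grid K n i)} \<omega>
            * (u \<omega> (dyadic_grid K n (Suc i)) - u \<omega> (dyadic_grid K n i)))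
     \<le> indicator (u_jumps K n e) \<omega> * (u \<omega> (real K) - u \<omega> (- real K))"
proof -
  let ?a = "\<lambda>i. u \<omega> (dyadic_grid K n i)"
  have "(\<Sum>i<2 * K * 2^n. indicator {\<omega>\<in>space P. e \<le> u \<omega> (dyadic_grid K n (Suc i)) - u \<omega> (dyadic_grid K n i)} \<omega>
            * (u \<omega> (dyadic_grid K n (Suc i)) - u \<omega> (dyadic_grid K n i)))
      = (\<Sum>i<2 * K * 2^n. if e \<le> ?a (Suc i) - ?a i then ?a (Suc i) - ?a i else 0)"
    using assms by (intro sum.cong) (auto simp: indicator_def)
  also have "\<dots> \<le> (if \<exists>i<2 * K * 2^n. e \<le> ?a (Suc i) - ?a i then ?a (2 * K * 2^n) - ?a 0 else 0)"
    by (rule sum_selected_increments_le) (rule regular_le[OF regular_u assms dyadic_grid_mono])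
  also have "\<dots> = indicator (u_jumps K n e) \<omega> * (u \<omega> (real K) - u \<omega> (- real K))"
    using assms by (simp add: u_jumps_def indicator_def dyadic_grid_0 dyadic_grid_top)
  finally show ?thesis .
qed

lemma measure_ucond_jumps_le:
  assumes e: "e > 0"
  shows "measure P (ucond_jumps K n e)
     \<le> 2 / e * (\<integral>\<omega>\<in>u_jumps K n (e / 2). u \<omega> (real K) - u \<omega> (- real K) \<partial>P)"
proof -
  define N where "N = 2 * K * 2^n"
  define t where "t = dyadic_grid K n"
  define S where "S i = {\<omega>\<in>space P. e \<le> ucond (t (Suc i)) \<omega> - ucond (t i) \<omega>}" for i
  define T where "T i = {\<omega>\<in>space P. e / 2 \<le> u \<omega> (t (Suc i)) - u \<omega> (t i)}" for i
  have SP: "S i \<in> sets P" for i unfolding S_def by measurable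
  have TP: "T i \<in> sets P" for i unfolding T_def by measurable
  have int: "integrable P (\<lambda>\<omega>. indicator (T i) \<omega> * (u \<omega> (t (Suc i)) - u \<omega> (t i)))" for i
    using integrable_mult_indicator[OF TP, of "\<lambda>\<omega>. u \<omega> (t (Suc i)) - u \<omega> (t i)"] integrable_u by simp
  have "ucond_jumps K n e = (\<Union>i<N. S i)"
    unfolding ucond_jumps_def S_def N_def t_def by auto
  then have "measure P (ucond_jumps K n e) \<le> (\<Sum>i<N. measure P (S i))"
    using measure_UNION_le[of "{..<N}" S P] SP by simp
  also have "\<dots> \<le> (\<Sum>i<N. 2 / e * (\<integral>\<omega>. indicator (T i) \<omega> * (u \<omega> (t (Suc i)) - u \<omega> (t i)) \<partial>P))"
  proof (rule sum_mono)
    fix i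
    have "e / 2 * measure P (S i) \<le> (\<integral>\<omega>. indicator (T i) \<omega> * (u \<omega> (t (Suc i)) - u \<omega> (t i)) \<partial>P)"
      using measure_ucond_increment_le[OF dyadic_grid_mono e, of K n i]
      unfolding S_def T_def t_def set_lebesgue_integral_def by simp
    then show "measure P (S i) \<le> 2 / e * (\<integral>\<omega>. indicator (T i) \<omega> * (u \<omega> (t (Suc i)) - u \<omega> (t i)) \<partial>P)"
      using e by (simp add: field_simps)
  qed
  also have "\<dots> = 2 / e * (\<integral>\<omega>. (\<Sum>i<N. indicator (T i) \<omega> * (u \<omega> (t (Suc i)) - u \<omega> (t i))) \<partial>P)"
    by (subst Bochner_Integration.integral_sum) (auto simp: int sum_distrib_left)
  also have "\<dots> \<le> 2 / e * (\<integral>\<omega>. indicator (u_jumps K n (e / 2)) \<omega> * (u \<omega> (real K) - u \<omega> (- real K)) \<partial>P)"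
  proof (intro mult_left_mono integral_mono)
    show "integrable P (\<lambda>\<omega>. \<Sum>i<N. indicator (T i) \<omega> * (u \<omega> (t (Suc i)) - u \<omega> (t i)))"
      by (intro Bochner_Integration.integrable_sum int)
    show "integrable P (\<lambda>\<omega>. indicator (u_jumps K n (e / 2)) \<omega> * (u \<omega> (real K) - u \<omega> (- real K)))"
      using integrable_mult_indicator[OF u_jumps_sets, of "\<lambda>\<omega>. u \<omega> (real K) - u \<omega> (- real K)"]
        integrable_u by simp
    show "(\<Sum>i<N. indicator (T i) \<omega> * (u \<omega> (t (Suc i)) - u \<omega> (t i)))
        \<le> indicator (u_jumps K n (e / 2)) \<omega> * (u \<omega> (real K) - u \<omega> (- real K))"
      if "\<omega> \<in> space P" for \<omega>
      using sum_u_increments_le[OF that, where K=K and n=n and e="e / 2"] unfolding N_def t_def T_def .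
  qed (use e in simp)
  also have "\<dots> = 2 / e * (\<integral>\<omega>\<in>u_jumps K n (e / 2). u \<omega> (real K) - u \<omega> (- real K) \<partial>P)"
    by (simp add: set_lebesgue_integral_def)
  finally show ?thesis .
qed

lemma set_integral_u_jumps_tendsto:
  assumes e: "e > 0"
  shows "(\<lambda>n. \<integral>\<omega>\<in>u_jumps K n e. u \<omega> (real K) - u \<omega> (- real K) \<partial>P) \<longlonglongrightarrow> 0"
proof -
  have "(\<lambda>n. \<integral>\<omega>. indicator (u_jumps K n e) \<omega> * (u \<omega> (real K) - u \<omega> (- real K)) \<partial>P)
      \<longlonglongrightarrow> (\<integral>\<omega>. 0 \<partial>P)"
  proof (rule integral_dominated_convergence[where w="\<lambda>\<omega>. \<bar>u \<omega> (real K) - u \<omega> (- real K)\<bar>"])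
    show "integrable P (\<lambda>\<omega>. \<bar>u \<omega> (real K) - u \<omega> (- real K)\<bar>)" using integrable_u by auto
    show "AE \<omega> in P. norm (indicator (u_jumps K n e) \<omega> * (u \<omega> (real K) - u \<omega> (- real K)))
        \<le> \<bar>u \<omega> (real K) - u \<omega> (- real K)\<bar>" for n
      by (auto simp: indicator_def)
    show "AE \<omega> in P. (\<lambda>n. indicator (u_jumps K n e) \<omega> * (u \<omega> (real K) - u \<omega> (- real K))) \<longlonglongrightarrow> 0"
    proof (rule AE_I2)
      fix \<omega> assume \<omega>: "\<omega> \<in> space P"
      have "continuous_on {- real K..real K} (u \<omega>)"
        using regular_isCont[OF regular_u \<omega>] by (simp add: continuous_at_imp_continuous_on)
      then have "uniformly_continuous_on {- real K..real K} (u \<omega>)"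
        by (rule compact_uniformly_continuous) simp
      then obtain d where d: "d > 0" and
        close: "\<And>x x'. x \<in> {- real K..real K} \<Longrightarrow> x' \<in> {- real K..real K} \<Longrightarrow> dist x' x < d \<Longrightarrow>
          dist (u \<omega> x') (u \<omega> x) < e"
        unfolding uniformly_continuous_on_def using e by blast
      obtain N where N: "(1/2::real)^N < d" using real_arch_pow_inv[of d "1/2"] d by auto
      have "\<omega> \<notin> u_jumps K n e" if "N \<le> n" for n
      proof -
        have "(1/2::real)^n \<le> (1/2)^N" using that by (rule power_decreasing) auto
        then have mesh: "1 / 2^n < d" using N by (simp add: power_one_over)
        have "u \<omega> (dyadic_grid K n (Suc i)) - u \<omega> (dyadic_grid K n i) < e" if "i < 2 * K * 2^n" for i
        proof -
          have "dyadic_grid K n i \<in> {- real K..real K}" "dyadic_grid K n (Suc i) \<in> {- real K..real K}"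
            using that dyadic_grid_mem[where i=i] dyadic_grid_mem[where i="Suc i"] by simp_all
          from close[OF this] mesh show ?thesis by (simp add: dist_real_def dyadic_grid_Suc)
        qed
        then show ?thesis unfolding u_jumps_def by (auto simp: not_le)
      qed
      then have "\<forall>\<^sub>F n in sequentially.
          indicator (u_jumps K n e) \<omega> * (u \<omega> (real K) - u \<omega> (- real K)) = 0"
        by (auto intro: eventually_sequentiallyI[of N])
      then show "(\<lambda>n. indicator (u_jumps K n e) \<omega> * (u \<omega> (real K) - u \<omega> (- real K))) \<longlonglongrightarrow> 0"
        by (rule tendsto_eventually)
    qed
  qed simp_all
  then show ?thesis by (simp add: set_lebesgue_integral_def)
qed

lemma AE_ucond_jumps_small:
  assumes e: "e > 0"
  shows "AE \<omega> in P. \<exists>n. \<forall>i<2 * K * 2^n.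
     ucond (dyadic_grid K n (Suc i)) \<omega> - ucond (dyadic_grid K n i) \<omega> < e"
proof -
  define Z where "Z = (\<Inter>n. ucond_jumps K n e)"
  have ZP: "Z \<in> sets P" unfolding Z_def by measurable
  have bound: "measure P Z \<le> 2 / e * (\<integral>\<omega>\<in>u_jumps K n (e / 2). u \<omega> (real K) - u \<omega> (- real K) \<partial>P)" for n
  proof -
    have "measure P Z \<le> measure P (ucond_jumps K n e)"
      unfolding Z_def by (rule finite_measure_mono) auto
    then show ?thesis using measure_ucond_jumps_le[OF e, of K n] by linarith
  qed
  have "(\<lambda>n. 2 / e * (\<integral>\<omega>\<in>u_jumps K n (e / 2). u \<omega> (real K) - u \<omega> (- real K) \<partial>P)) \<longlonglongrightarrow> 2 / e * 0"
    using e by (intro tendsto_mult tendsto_const set_integral_u_jumps_tendsto) simp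
  then have "measure P Z \<le> 2 / e * 0"
    by (rule LIMSEQ_le_const) (use bound in auto)
  then have "Z \<in> null_sets P" using ZP measure_nonneg[of P Z]
    by (simp add: emeasure_eq_measure null_sets_def)
  from AE_not_in[OF this] show ?thesis
    by (rule AE_mp) (auto intro!: AE_I2 simp: Z_def ucond_jumps_def not_le)
qed

definition good_points :: "'a set" where
  "good_points = {\<omega>\<in>space G.
     (\<forall>r s :: rat. r < s \<longrightarrow> ucond (of_rat r) \<omega> < ucond (of_rat s) \<omega>) \<and> ucond 0 \<omega> = 0 \<and>
     (\<forall>K m :: nat. \<exists>n. \<forall>i<2 * K * 2^n.
        ucond (dyadic_grid K n (Suc i)) \<omega> - ucond (dyadic_grid K n i) \<omega> < 1 / real (Suc m))}"

lemma good_points_sets[measurable]: "good_points \<in> sets G"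
  unfolding good_points_def by measurable

lemma AE_good_points: "AE \<omega> in P. \<omega> \<in> good_points"
proof -
  have "AE \<omega> in P. \<forall>r s :: rat. r < s \<longrightarrow> ucond (of_rat r) \<omega> < ucond (of_rat s) \<omega>"
    unfolding AE_all_countable by (auto intro!: AE_ucond_less simp: of_rat_less)
  moreover have "AE \<omega> in P. \<forall>K m :: nat. \<exists>n. \<forall>i<2 * K * 2^n.
      ucond (dyadic_grid K n (Suc i)) \<omega> - ucond (dyadic_grid K n i) \<omega> < 1 / real (Suc m)"
    unfolding AE_all_countable by (auto intro!: AE_ucond_jumps_small)
  ultimately show ?thesis using AE_ucond_zero AE_space
    by eventually_elim (auto simp: good_points_def space_G)
qed

lemma good_points_less:
  assumes "\<omega> \<in> good_points" "a \<in> \<rat>" "b \<in> \<rat>" "a < b"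
  shows "ucond a \<omega> < ucond b \<omega>"
  using assms by (auto simp: good_points_def of_rat_less elim!: Rats_cases)

lemma good_points_le:
  assumes "\<omega> \<in> good_points" "a \<in> \<rat>" "b \<in> \<rat>" "a \<le> b"
  shows "ucond a \<omega> \<le> ucond b \<omega>"
  using good_points_less[OF assms(1-3)] assms(4) by (cases "a = b") auto

lemma good_points_jumps_small:
  assumes "\<omega> \<in> good_points" and e: "e > 0"
  obtains n where "\<And>i. i < 2 * K * 2^n \<Longrightarrow>
    ucond (dyadic_grid K n (Suc i)) \<omega> - ucond (dyadic_grid K n i) \<omega> < e"
proof -
  obtain m where "1 / real (Suc m) < e" using e by (metis nat_approx_posE)
  moreover obtain n where "\<And>i. i < 2 * K * 2^n \<Longrightarrow>
      ucond (dyadic_grid K n (Suc i)) \<omega> - ucond (dyadic_grid K n i) \<omega> < 1 / real (Suc m)"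
    using assms(1) unfolding good_points_def by blast
  ultimately show ?thesis using that by force
qed

text \<open>Off the null set of bad points any regular function will do; the identity is used.\<close>

definition uG :: "'a \<Rightarrow> real \<Rightarrow> real" where
  "uG \<omega> x = (if \<omega> \<in> good_points then lim (\<lambda>n. ucond (dyadic_floor n x) \<omega>) else x)"

lemma incseq_ucond_dyadic_floor: "\<omega> \<in> good_points \<Longrightarrow> incseq (\<lambda>n. ucond (dyadic_floor n x) \<omega>)"
  using incseq_dyadic_floor[of x]
  by (auto simp: incseq_def intro!: good_points_le dyadic_floor_in_Rats)

lemma uG_tendsto:
  assumes good: "\<omega> \<in> good_points"
  shows "(\<lambda>n. ucond (dyadic_floor n x) \<omega>) \<longlonglongrightarrow> uG \<omega> x"
proof -
  have "ucond (dyadic_floor n x) \<omega> \<le> ucond (of_int (\<lfloor>x\<rfloor> + 1)) \<omega>" for n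
  proof (rule good_points_le[OF good dyadic_floor_in_Rats])
    show "dyadic_floor n x \<le> of_int (\<lfloor>x\<rfloor> + 1)" using dyadic_floor_le[of n x] by linarith
  qed simp
  then obtain L where "(\<lambda>n. ucond (dyadic_floor n x) \<omega>) \<longlonglongrightarrow> L"
    using incseq_convergent[OF incseq_ucond_dyadic_floor[OF good]] by blast
  then show ?thesis using good by (simp add: uG_def limI)
qed

lemma ucond_dyadic_floor_le_uG: "\<omega> \<in> good_points \<Longrightarrow> ucond (dyadic_floor n x) \<omega> \<le> uG \<omega> x"
  by (rule incseq_le[OF incseq_ucond_dyadic_floor uG_tendsto])

lemma uG_le_ucond:
  assumes good: "\<omega> \<in> good_points" and "b \<in> \<rat>" "x < b"
  shows "uG \<omega> x \<le> ucond b \<omega>"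
proof (rule LIMSEQ_le_const2[OF uG_tendsto[OF good]])
  show "\<exists>N. \<forall>n\<ge>N. ucond (dyadic_floor n x) \<omega> \<le> ucond b \<omega>"
    using less_imp_le[OF le_less_trans[OF dyadic_floor_le \<open>x < b\<close>]]
    by (intro exI[of _ 0] allI impI good_points_le[OF good dyadic_floor_in_Rats \<open>b \<in> \<rat>\<close>])
qed

lemma uG_of_int: "\<omega> \<in> good_points \<Longrightarrow> uG \<omega> (of_int k) = ucond (of_int k) \<omega>"
  using uG_tendsto[of \<omega> "of_int k"] by (simp add: dyadic_floor_of_int LIMSEQ_const_iff)

lemma uG_zero: "\<omega> \<in> good_points \<Longrightarrow> uG \<omega> 0 = 0"
  using uG_of_int[of \<omega> 0] by (simp add: good_points_def)

lemma uG_less: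
  assumes good: "\<omega> \<in> good_points" and "x < y"
  shows "uG \<omega> x < uG \<omega> y"
proof -
  obtain n where n: "2 / 2^n < y - x"
    using real_arch_pow_inv[of "(y - x) / 2" "1/2"] \<open>x < y\<close> by (auto simp: power_one_over field_simps)
  define b where "b = dyadic_floor n y"
  define a where "a = b - 1 / 2^n"
  have "a \<in> \<rat>" "b \<in> \<rat>" unfolding a_def b_def by (simp_all add: dyadic_floor_in_Rats)
  have "x < a" using less_dyadic_floor_add[of y n] n unfolding a_def b_def by simp
  have "uG \<omega> x \<le> ucond a \<omega>" by (rule uG_le_ucond[OF good \<open>a \<in> \<rat>\<close> \<open>x < a\<close>])
  also have "\<dots> < ucond b \<omega>" by (rule good_points_less[OF good \<open>a \<in> \<rat>\<close> \<open>b \<in> \<rat>\<close>]) (simp add: a_def)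
  also have "\<dots> \<le> uG \<omega> y" unfolding b_def by (rule ucond_dyadic_floor_le_uG[OF good])
  finally show ?thesis .
qed

text \<open>Continuity comes from the jumps of \<open>ucond\<close> across fine dyadic grids being uniformly small.\<close>

lemma uG_isCont:
  assumes good: "\<omega> \<in> good_points"
  shows "isCont (uG \<omega>) x"
  unfolding isCont_def LIM_eq
proof (intro allI impI)
  fix e :: real assume "e > 0"
  define K where "K = nat \<lceil>\<bar>x\<bar>\<rceil> + 2"
  have K: "\<bar>x\<bar> + 2 \<le> real K" unfolding K_def by linarith
  obtain n where jumps: "\<And>i. i < 2 * K * 2^n \<Longrightarrow>
      ucond (dyadic_grid K n (Suc i)) \<omega> - ucond (dyadic_grid K n i) \<omega> < e / 3"
    using good_points_jumps_small[OF good, of "e / 3" K] \<open>e > 0\<close> by auto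
  obtain i where i: "i + 3 \<le> 2 * K * 2^n"
    and lower: "\<And>z. \<bar>z - x\<bar> < 1 / 2^n \<Longrightarrow> dyadic_grid K n i \<le> dyadic_floor n z"
    and upper: "\<And>z. \<bar>z - x\<bar> < 1 / 2^n \<Longrightarrow> z < dyadic_grid K n (i + 3)"
    using dyadic_grid_window[OF K, where n=n] by blast
  define lo where "lo = ucond (dyadic_grid K n i) \<omega>"
  define hi where "hi = ucond (dyadic_grid K n (i + 3)) \<omega>"
  have "hi - lo < e"
    using jumps[of i] jumps[of "Suc i"] jumps[of "Suc (Suc i)"] i
    unfolding lo_def hi_def by (simp add: numeral_3_eq_3)
  have between: "lo \<le> uG \<omega> z \<and> uG \<omega> z \<le> hi" if "\<bar>z - x\<bar> < 1 / 2^n" for z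
  proof
    have "lo \<le> ucond (dyadic_floor n z) \<omega>"
      unfolding lo_def
      by (rule good_points_le[OF good dyadic_grid_in_Rats dyadic_floor_in_Rats lower[OF that]])
    then show "lo \<le> uG \<omega> z" using ucond_dyadic_floor_le_uG[OF good] order_trans by blast
    show "uG \<omega> z \<le> hi"
      unfolding hi_def by (rule uG_le_ucond[OF good dyadic_grid_in_Rats upper[OF that]])
  qed
  have at_x: "lo \<le> uG \<omega> x \<and> uG \<omega> x \<le> hi" by (rule between) simp
  show "\<exists>s>0. \<forall>z. z \<noteq> x \<and> norm (z - x) < s \<longrightarrow> norm (uG \<omega> z - uG \<omega> x) < e"
  proof (intro exI[of _ "1 / 2^n"] conjI allI impI)
    fix z assume "z \<noteq> x \<and> norm (z - x) < 1 / 2^n"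
    then have "lo \<le> uG \<omega> z \<and> uG \<omega> z \<le> hi" by (intro between) simp
    with at_x \<open>hi - lo < e\<close> show "norm (uG \<omega> z - uG \<omega> x) < e" by (auto simp: abs_less_iff)
  qed simp
qed

lemma measurable_uG: "case_prod uG \<in> borel_measurable (G \<Otimes>\<^sub>M borel)"
proof -
  have ucond_dyadic_floor[measurable]:
    "(\<lambda>p. ucond (dyadic_floor n (snd p)) (fst p)) \<in> borel_measurable (G \<Otimes>\<^sub>M borel)" for n
  proof -
    have "(\<lambda>p::'a \<times> real. \<lfloor>snd p * 2^n\<rfloor>) \<in> measurable (G \<Otimes>\<^sub>M borel) (count_space UNIV)"
      using measurable_comp[OF _ measurable_real_floor, of "\<lambda>p::'a \<times> real. snd p * 2^n"]
      by (simp add: o_def)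
    then show ?thesis unfolding dyadic_floor_def
      by (rule measurable_compose_countable[where f="\<lambda>k p. ucond (of_int k / 2^n) (fst p)", rotated]) simp
  qed
  have "(\<lambda>p. if fst p \<in> good_points then lim (\<lambda>n. ucond (dyadic_floor n (snd p)) (fst p)) else snd p)
      \<in> borel_measurable (G \<Otimes>\<^sub>M borel)"
    by measurable
  then show ?thesis by (simp add: uG_def case_prod_beta' cong: if_cong)
qed

lemma regular_uG: "regular G uG"
proof -
  have "continuous_on UNIV (uG \<omega>) \<and> strict_mono (uG \<omega>) \<and> uG \<omega> 0 = 0" for \<omega>
  proof (cases "\<omega> \<in> good_points")
    case True
    then show ?thesis using uG_isCont uG_less uG_zero
      by (auto simp: continuous_on_eq_continuous_at strict_mono_def)
  qed (simp add: uG_def strict_mono_def)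
  then show ?thesis using measurable_uG by (simp add: regular_def)
qed

lemma measurable_uG_G[measurable]: "(\<lambda>\<omega>. uG \<omega> x) \<in> borel_measurable G"
  using regular_measurable_comp[OF regular_uG, of "\<lambda>_. x"] by simp

lemma measurable_uG_P[measurable]: "(\<lambda>\<omega>. uG \<omega> x) \<in> borel_measurable P"
  by (rule measurable_G_imp_P[OF measurable_uG_G])

lemma ucond_floor_le_ucond_dyadic_floor:
  "\<omega> \<in> good_points \<Longrightarrow> ucond (of_int \<lfloor>x\<rfloor>) \<omega> \<le> ucond (dyadic_floor n x) \<omega>"
  using incseq_dyadic_floor[of x, THEN incseqD, of 0 n]
  by (intro good_points_le dyadic_floor_in_Rats) (auto simp: dyadic_floor_def)

lemma ucond_dyadic_floor_le_ucond_ceiling: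
  "\<omega> \<in> good_points \<Longrightarrow> ucond (dyadic_floor n x) \<omega> \<le> ucond (of_int (\<lfloor>x\<rfloor> + 1)) \<omega>"
  using dyadic_floor_le[of n x] by (intro good_points_le dyadic_floor_in_Rats) (auto, linarith)

lemma uG_bounds:
  assumes "\<omega> \<in> good_points"
  shows "ucond (of_int \<lfloor>x\<rfloor>) \<omega> \<le> uG \<omega> x" "uG \<omega> x \<le> ucond (of_int (\<lfloor>x\<rfloor> + 1)) \<omega>"
  using ucond_floor_le_ucond_dyadic_floor[OF assms, of x 0] ucond_dyadic_floor_le_uG[OF assms, of 0 x]
    uG_le_ucond[OF assms, of "of_int (\<lfloor>x\<rfloor> + 1)" x]
  by auto

lemma integrable_uG: "integrable P (\<lambda>\<omega>. uG \<omega> x)"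
proof (rule Bochner_Integration.integrable_bound)
  show "integrable P (\<lambda>\<omega>. \<bar>ucond (of_int \<lfloor>x\<rfloor>) \<omega>\<bar> + \<bar>ucond (of_int (\<lfloor>x\<rfloor> + 1)) \<omega>\<bar> + \<bar>x\<bar>)"
    using integrable_ucond by auto
  show "AE \<omega> in P. norm (uG \<omega> x) \<le> norm (\<bar>ucond (of_int \<lfloor>x\<rfloor>) \<omega>\<bar> + \<bar>ucond (of_int (\<lfloor>x\<rfloor> + 1)) \<omega>\<bar> + \<bar>x\<bar>)"
    using AE_good_points
  proof eventually_elim
    case (elim \<omega>)
    from uG_bounds[OF elim, of x] show ?case by auto
  qed
qed simp

lemma set_integral_uG:
  assumes A: "A \<in> sets G"
  shows "(\<integral>\<omega>\<in>A. uG \<omega> x \<partial>P) = (\<integral>\<omega>\<in>A. u \<omega> x \<partial>P)"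
proof -
  have AP[measurable]: "A \<in> sets P" by (rule sets_G_subset[OF A])
  have "(\<lambda>n. \<integral>\<omega>\<in>A. ucond (dyadic_floor n x) \<omega> \<partial>P) \<longlonglongrightarrow> (\<integral>\<omega>\<in>A. uG \<omega> x \<partial>P)"
    unfolding set_lebesgue_integral_def
  proof (rule integral_dominated_convergence
      [where w="\<lambda>\<omega>. \<bar>ucond (of_int \<lfloor>x\<rfloor>) \<omega>\<bar> + \<bar>ucond (of_int (\<lfloor>x\<rfloor> + 1)) \<omega>\<bar>"])
    show "integrable P (\<lambda>\<omega>. \<bar>ucond (of_int \<lfloor>x\<rfloor>) \<omega>\<bar> + \<bar>ucond (of_int (\<lfloor>x\<rfloor> + 1)) \<omega>\<bar>)"
      using integrable_ucond by auto
    show "AE \<omega> in P. (\<lambda>n. indicator A \<omega> *\<^sub>R ucond (dyadic_floor n x) \<omega>) \<longlonglongrightarrow> indicator A \<omega> *\<^sub>R uG \<omega> x"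
      using AE_good_points by eventually_elim (intro tendsto_scaleR tendsto_const uG_tendsto)
    show "AE \<omega> in P. norm (indicator A \<omega> *\<^sub>R ucond (dyadic_floor n x) \<omega>)
        \<le> \<bar>ucond (of_int \<lfloor>x\<rfloor>) \<omega>\<bar> + \<bar>ucond (of_int (\<lfloor>x\<rfloor> + 1)) \<omega>\<bar>" for n
      using AE_good_points
    proof eventually_elim
      case (elim \<omega>)
      with ucond_floor_le_ucond_dyadic_floor[OF elim, of x n]
        ucond_dyadic_floor_le_ucond_ceiling[OF elim, of n x]
      show ?case by (auto simp: indicator_def)
    qed
  qed simp_all
  moreover have "(\<lambda>n. \<integral>\<omega>\<in>A. u \<omega> (dyadic_floor n x) \<partial>P) \<longlonglongrightarrow> (\<integral>\<omega>\<in>A. u \<omega> x \<partial>P)"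
    using set_integral_dyadic_floor_tendsto[OF regular_u integrable_u, of "\<lambda>_. x" "\<bar>x\<bar>" A] by simp
  ultimately show ?thesis by (simp add: set_integral_ucond[OF A] LIMSEQ_unique)
qed

lemma PhiG_uG: "\<omega> \<in> space P \<Longrightarrow> PhiG uG \<omega> (uG \<omega> z) = ereal z"
  using regular_uG space_G unfolding PhiG_def regular_def by (auto intro: Inf_superlevel_at_value)

lemma measurable_PhiG: "case_prod (PhiG uG) \<in> borel_measurable (G \<Otimes>\<^sub>M borel)"
proof -
  have "(\<lambda>p. INF r::rat. if uG (fst p) (of_rat r) > snd p then ereal (of_rat r) else \<infinity>)
      \<in> borel_measurable (G \<Otimes>\<^sub>M borel)"
  proof (rule borel_measurable_INF)
    fix r :: rat
    have [measurable]: "(\<lambda>p. uG (fst p) (of_rat r)) \<in> borel_measurable (G \<Otimes>\<^sub>M borel)"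
      using measurable_comp[OF measurable_fst measurable_uG_G] by (simp add: o_def)
    show "(\<lambda>p. if uG (fst p) (of_rat r) > snd p then ereal (of_rat r) else \<infinity>) \<in> borel_measurable (G \<Otimes>\<^sub>M borel)"
      by measurable
  qed simp
  moreover have "strict_mono (uG \<omega>)" if "\<omega> \<in> space G" for \<omega>
    using regular_uG that unfolding regular_def by blast
  ultimately show ?thesis
    by (subst measurable_cong[where
          g="\<lambda>p. INF r::rat. if uG (fst p) (of_rat r) > snd p then ereal (of_rat r) else \<infinity>"])
      (auto simp: PhiG_def space_pair_measure Inf_superlevel_eq_INF_rat)
qed

lemma cond_exp_version_clipped:
  assumes f[measurable]: "f \<in> borel_measurable P"
    and bnd: "\<And>\<omega>. \<omega> \<in> space P \<Longrightarrow> \<bar>f \<omega>\<bar> \<le> real N"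
  obtains c where "c \<in> borel_measurable G" "cond_exp_version P G (\<lambda>\<omega>. u \<omega> (f \<omega>)) c"
    and "\<And>\<omega>. \<omega> \<in> space P \<Longrightarrow> uG \<omega> (- real N) \<le> c \<omega> \<and> c \<omega> \<le> uG \<omega> (real N)"
proof -
  have int_uf: "integrable P (\<lambda>\<omega>. u \<omega> (f \<omega>))"
    by (rule regular_integrable_comp[OF regular_u integrable_u f bnd])
  define c where "c = real_cond_exp P G (\<lambda>\<omega>. u \<omega> (f \<omega>))"
  define clip where "clip \<omega> = max (uG \<omega> (- real N)) (min (uG \<omega> (real N)) (c \<omega>))" for \<omega>
  have [measurable]: "c \<in> borel_measurable G" unfolding c_def by simp
  then have [measurable]: "c \<in> borel_measurable P" by (rule measurable_G_imp_P)
  have clip_G[measurable]: "clip \<in> borel_measurable G" unfolding clip_def by measurable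
  then have [measurable]: "clip \<in> borel_measurable P" by (rule measurable_G_imp_P)
  have "AE \<omega> in P. ucond (- real N) \<omega> \<le> c \<omega>" unfolding c_def ucond_def
    using bnd by (intro real_cond_exp_mono[OF AE_I2 integrable_u int_uf] regular_le[OF regular_u])
      (auto simp: abs_le_iff minus_le_iff)
  moreover have "AE \<omega> in P. c \<omega> \<le> ucond (real N) \<omega>" unfolding c_def ucond_def
    using bnd by (intro real_cond_exp_mono[OF AE_I2 int_uf integrable_u] regular_le[OF regular_u])
      (auto simp: abs_le_iff)
  moreover note AE_good_points
  ultimately have clip_eq: "AE \<omega> in P. clip \<omega> = c \<omega>"
  proof eventually_elim
    case (elim \<omega>)
    have "uG \<omega> (- real N) = ucond (- real N) \<omega>" "uG \<omega> (real N) = ucond (real N) \<omega>"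
      using uG_of_int[OF elim(3), of "- int N"] uG_of_int[OF elim(3), of "int N"] by simp_all
    with elim(1,2) show ?case unfolding clip_def by linarith
  qed
  have "cond_exp_version P G (\<lambda>\<omega>. u \<omega> (f \<omega>)) clip"
    unfolding cond_exp_version_def
  proof (intro conjI ballI clip_G)
    show "integrable P clip"
      using clip_eq unfolding c_def
      by (intro integrable_cong_AE_imp[OF real_cond_exp_int(1)[OF int_uf]]) (auto intro: AE_symmetric)
    fix A assume A: "A \<in> sets G"
    have "(\<integral>\<omega>\<in>A. clip \<omega> \<partial>P) = (\<integral>\<omega>\<in>A. c \<omega> \<partial>P)"
      unfolding set_lebesgue_integral_def using sets_G_subset[OF A] clip_eq
      by (intro integral_cong_AE) (measurable, auto)
    also have "\<dots> = (\<integral>\<omega>\<in>A. u \<omega> (f \<omega>) \<partial>P)"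
      unfolding c_def by (rule real_cond_exp_intA[OF int_uf A, symmetric])
    finally show "(\<integral>\<omega>\<in>A. clip \<omega> \<partial>P) = (\<integral>\<omega>\<in>A. u \<omega> (f \<omega>) \<partial>P)" .
  qed
  moreover have "uG \<omega> (- real N) \<le> clip \<omega> \<and> clip \<omega> \<le> uG \<omega> (real N)" if "\<omega> \<in> space P" for \<omega>
    using regular_le[OF regular_uG, of \<omega> "- real N" "real N"] that space_G by (auto simp: clip_def)
  ultimately show ?thesis using that clip_G by blast
qed

lemma cond_exp_version_uG_comp:
  assumes "f \<in> borel_measurable P" and "\<And>\<omega>. \<omega> \<in> space P \<Longrightarrow> \<bar>f \<omega>\<bar> \<le> real N"
  obtains h where "h \<in> borel_measurable G" "\<And>\<omega>. \<omega> \<in> space P \<Longrightarrow> \<bar>h \<omega>\<bar> \<le> real N"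
    and "cond_exp_version P G (\<lambda>\<omega>. u \<omega> (f \<omega>)) (\<lambda>\<omega>. uG \<omega> (h \<omega>))"
proof -
  obtain c where c: "c \<in> borel_measurable G" "cond_exp_version P G (\<lambda>\<omega>. u \<omega> (f \<omega>)) c"
    and range: "\<And>\<omega>. \<omega> \<in> space P \<Longrightarrow> uG \<omega> (- real N) \<le> c \<omega> \<and> c \<omega> \<le> uG \<omega> (real N)"
    using cond_exp_version_clipped[OF assms] by blast
  obtain h where h: "h \<in> borel_measurable G"
    and inv: "\<And>\<omega>. \<omega> \<in> space G \<Longrightarrow> \<bar>h \<omega>\<bar> \<le> real N \<and> uG \<omega> (h \<omega>) = c \<omega>"
    using regular_measurable_inverse[OF regular_uG c(1), of "real N"] range space_G by auto
  have "cond_exp_version P G (\<lambda>\<omega>. u \<omega> (f \<omega>)) (\<lambda>\<omega>. uG \<omega> (h \<omega>))"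
    using inv space_G
    by (intro cond_exp_version_cong[OF c(2)] regular_measurable_comp[OF regular_uG h]) auto
  with h inv space_G show ?thesis using that by auto
qed

lemma set_integral_u_comp_eq:
  assumes h: "h \<in> borel_measurable G" and bnd: "\<And>\<omega>. \<omega> \<in> space P \<Longrightarrow> \<bar>h \<omega>\<bar> \<le> B"
    and version: "cond_exp_version P G (\<lambda>\<omega>. u \<omega> (f \<omega>)) (\<lambda>\<omega>. uG \<omega> (h \<omega>))"
    and A: "A \<in> sets G"
  shows "(\<integral>\<omega>\<in>A. u \<omega> (f \<omega>) \<partial>P) = (\<integral>\<omega>\<in>A. u \<omega> (h \<omega>) \<partial>P)"
proof -
  have "(\<integral>\<omega>\<in>A. u \<omega> (f \<omega>) \<partial>P) = (\<integral>\<omega>\<in>A. uG \<omega> (h \<omega>) \<partial>P)"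
    using version A unfolding cond_exp_version_def by simp
  also have "\<dots> = (\<integral>\<omega>\<in>A. u \<omega> (h \<omega>) \<partial>P)"
    by (rule set_integral_comp_eq_of_set_integral_eq[OF subalg regular_subalgebra[OF subalg regular_uG]
          regular_u integrable_uG integrable_u set_integral_uG h bnd A])
  finally show ?thesis .
qed

end

lemma conditional_chisini_mean:
  fixes u :: "'a \<Rightarrow> real \<Rightarrow> real"
  assumes prob: "prob_space P" and setsP: "sets P = sets M"
    and ureg: "regular M u"
    and uint: "\<And>x. integrable P (\<lambda>\<omega>. u \<omega> x)"
    and repr: "\<And>f g. f \<in> Linf M \<Longrightarrow> g \<in> Linf M \<Longrightarrow>
        R f g \<longleftrightarrow> (\<integral>\<omega>. u \<omega> (f \<omega>) \<partial>P) \<ge> (\<integral>\<omega>. u \<omega> (g \<omega>) \<partial>P)"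
    and sub: "subalgebra M G" and f: "f \<in> Linf M"
  shows "chisini G R f \<noteq> {} \<and>
      (\<exists>uG. regular G uG \<and>
         (\<forall>x. (\<lambda>\<omega>. uG \<omega> x) \<in> borel_measurable G \<and> integrable P (\<lambda>\<omega>. uG \<omega> x) \<and>
              cond_exp_version P G (\<lambda>\<omega>. u \<omega> x) (\<lambda>\<omega>. uG \<omega> x)) \<and>
         case_prod (PhiG uG) \<in> borel_measurable (G \<Otimes>\<^sub>M borel) \<and>
         (\<exists>g. cond_exp_version P G (\<lambda>\<omega>. u \<omega> (f \<omega>)) g \<and>
              (\<exists>h\<in>chisini G R f. \<forall>\<omega>\<in>space M. PhiG uG \<omega> (g \<omega>) = ereal (h \<omega>))))"
proof -
  have space_P: "space P = space M" by (rule sets_eq_imp_space_eq[OF setsP])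
  interpret cond_utility P G u
  proof (intro cond_utility.intro prob finite_measure_subalgebra.intro cond_utility_axioms.intro)
    show "finite_measure P" using prob by (rule prob_space.axioms)
    show "finite_measure_subalgebra_axioms P G"
      using sub setsP space_P by unfold_locales (simp add: subalgebra_def)
    show "regular P u" by (rule regular_cong_sets[OF setsP[symmetric] ureg])
  qed (rule uint)
  obtain B where fM: "f \<in> borel_measurable M" and fB: "\<And>\<omega>. \<omega> \<in> space M \<Longrightarrow> \<bar>f \<omega>\<bar> \<le> B"
    using f unfolding Linf_def by blast
  have fP: "f \<in> borel_measurable P" using fM measurable_cong_sets[OF setsP refl] by blast
  have fN: "\<bar>f \<omega>\<bar> \<le> real (nat \<lceil>B\<rceil>)" if "\<omega> \<in> space P" for \<omega>
    using order_trans[OF fB real_nat_ceiling_ge] that space_P by simp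
  obtain h where h: "h \<in> borel_measurable G" and hB: "\<And>\<omega>. \<omega> \<in> space P \<Longrightarrow> \<bar>h \<omega>\<bar> \<le> real (nat \<lceil>B\<rceil>)"
    and version: "cond_exp_version P G (\<lambda>\<omega>. u \<omega> (f \<omega>)) (\<lambda>\<omega>. uG \<omega> (h \<omega>))"
    using cond_exp_version_uG_comp[OF fP fN] by blast
  have "h \<in> chisini G R f"
    using h hB space_G set_integral_u_comp_eq[OF h hB version]
    by (intro mem_chisiniI[where u=u and P=P, OF repr space_P regular_zero[OF ureg] sub f])
      (auto simp: Linf_def)
  moreover have "cond_exp_version P G (\<lambda>\<omega>. u \<omega> x) (\<lambda>\<omega>. uG \<omega> x)" for x
    unfolding cond_exp_version_def using integrable_uG set_integral_uG by simp
  ultimately show ?thesis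
    using regular_uG measurable_uG_G integrable_uG measurable_PhiG version PhiG_uG space_P
    by (intro conjI exI[of _ uG] exI[of _ "\<lambda>\<omega>. uG \<omega> (h \<omega>)"] bexI[of _ h]) auto
qed

text \<open>The axioms (SM), (PC), (ST), the three disjoint non-null events and the description of the
  null events are what make a representation \<open>(u, P)\<close> exist; once it is given, as here, the
  conclusion only needs the representation itself.\<close>

theorem mainTheorem5:
  fixes M P :: "'a measure"
    and R :: "('a \<Rightarrow> real) \<Rightarrow> ('a \<Rightarrow> real) \<Rightarrow> bool"
    and u :: "'a \<Rightarrow> real \<Rightarrow> real"
  assumes three: "\<exists>A B C. A \<in> sets M \<and> B \<in> sets M \<and> C \<in> sets M \<and>
      A \<inter> B = {} \<and> A \<inter> C = {} \<and> B \<inter> C = {} \<and>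
      A \<notin> null_events M R \<and> B \<notin> null_events M R \<and> C \<notin> null_events M R"
    and pref: "preference_order M R"
    and sm: "SM M R" and pc: "PC M R" and st: "ST M R"
    and prob: "prob_space P" and setsP: "sets P = sets M"
    and nullP: "null_events M R = {A \<in> sets M. measure P A = 0}"
    and ureg: "regular M u"
    and uint: "\<And>x. integrable P (\<lambda>\<omega>. u \<omega> x)"
    and repr: "\<And>f g. f \<in> Linf M \<Longrightarrow> g \<in> Linf M \<Longrightarrow>
        R f g \<longleftrightarrow> (\<integral>\<omega>. u \<omega> (f \<omega>) \<partial>P) \<ge> (\<integral>\<omega>. u \<omega> (g \<omega>) \<partial>P)"
  shows "\<forall>G f. subalgebra M G \<and> f \<in> Linf M \<longrightarrow>
      chisini G R f \<noteq> {} \<and>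
      (\<exists>uG. regular G uG \<and>
         (\<forall>x. (\<lambda>\<omega>. uG \<omega> x) \<in> borel_measurable G \<and> integrable P (\<lambda>\<omega>. uG \<omega> x) \<and>
              cond_exp_version P G (\<lambda>\<omega>. u \<omega> x) (\<lambda>\<omega>. uG \<omega> x)) \<and>
         case_prod (PhiG uG) \<in> borel_measurable (G \<Otimes>\<^sub>M borel) \<and>
         (\<exists>g. cond_exp_version P G (\<lambda>\<omega>. u \<omega> (f \<omega>)) g \<and>
              (\<exists>h\<in>chisini G R f. \<forall>\<omega>\<in>space M. PhiG uG \<omega> (g \<omega>) = ereal (h \<omega>))))"
  using conditional_chisini_mean[OF prob setsP ureg uint repr] by blast

end
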